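(* Let $s>1$ be an integer, $z\in\mathbb{C}$ and $a$ a parameter for which the Lerch transcendent $\Phi(z,s,a)$ is defined. If the integral converges, then \[ \Phi(z,s,a)=\int_{[0,1]^{s+1}}\frac{-s\prod_{n=1}^{s+1}x_n^{a-1}}{\left(1-z\prod_{n=1}^{s+1}x_n\right)\log\left(\prod_{n=1}^{s+1}x_n\right)}\prod_{n=1}^{s+1}dx_n, \] and \[ \zeta(s)=\int_{[0,1]^{s+1}}\frac{-s}{\left(1-\prod_{k=1}^{s+1}x_k\right)\log\left(\prod_{k=1}^{s+1}x_k\right)}\prod_{k=1}^{s+1}dx_k. \]
   Context: The Lerch transcendent is $\Phi(z,s,a)=\sum_{k=0}^\infty \frac{z^k}{(k+a)^s}$ (where this series converges); $\zeta$ is the Riemann zeta function. *)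

theory Defs
  imports "HOL-Analysis.Analysis"
begin

definition lerch_phi :: "complex \<Rightarrow> nat \<Rightarrow> complex \<Rightarrow> complex" where
  "lerch_phi z s a = (\<Sum>k. z ^ k / (of_nat k + a) ^ s)"

definition zeta_int :: "nat \<Rightarrow> complex" where
  "zeta_int s = (\<Sum>k. 1 / (of_nat (Suc k)) ^ s)"

definition cube_measure :: "nat \<Rightarrow> (nat \<Rightarrow> real) measure" where
  "cube_measure s = PiM {1..s+1} (\<lambda>_. lborel)"

definition unit_cube :: "nat \<Rightarrow> (nat \<Rightarrow> real) set" where
  "unit_cube s = PiE {1..s+1} (\<lambda>_. {0..1})"

end

theory Submission
  imports Defs "HOL-Real_Asymp.Real_Asymp"
begin

text \<open>
  Write P for the product of the coordinates on the unit cube [0,1]^(s+1). For Re b > 0 the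
  integral of P^(b-1) factorises into b^-(s+1). Since 1/(-ln P) is the integral of P^u over
  u >= 0, Fubini turns the integral of P^(b-1)/(-ln P) into the integral of (b+u)^-(s+1) over
  u >= 0, which is 1/(s b^s). Expanding 1/(1 - zP) as a geometric series, the k-th term of the
  Lerch integrand therefore integrates to z^k/(k+a)^s, and dominated convergence sums the series;
  twice the integrand is a dominating function because summability of the Lerch series forces
  |z| <= 1. Integrability of the Lerch integrand forces Re a > 0: otherwise it dominates s/2 times
  P^(t-1)/(-ln P) for every t > 0, whose integral 1/(s t^s) is unbounded. The zeta case is z = a = 1.
\<close>

section \<open>Complex powers of reals\<close>

lemma Ln_of_real_neg:
  fixes t :: real assumes "t < 0"
  shows "Ln (complex_of_real t) = of_real (ln (-t)) + \<i> * pi"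
proof -
  have "complex_of_real t = exp (of_real (ln (-t)) + \<i> * pi)"
    using assms by (simp add: exp_add exp_of_real)
  then show ?thesis
    by (simp add: Ln_exp)
qed

lemma borel_measurable_Ln_of_real [measurable]:
  "(\<lambda>t::real. Ln (complex_of_real t)) \<in> borel_measurable borel"
proof -
  have "(\<lambda>t::real. Ln (complex_of_real t)) =
        (\<lambda>t. if 0 < t then of_real (ln t) else if t = 0 then Ln 0 else of_real (ln (-t)) + \<i> * pi)"
    by (auto simp: Ln_of_real Ln_of_real_neg fun_eq_iff)
  also have "\<dots> \<in> borel_measurable borel" by measurable
  finally show ?thesis .
qed

lemma borel_measurable_powr_of_real [measurable]:
  fixes f :: "'a \<Rightarrow> real" and c :: "'a \<Rightarrow> complex"
  assumes [measurable]: "f \<in> borel_measurable M" "c \<in> borel_measurable M"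
  shows "(\<lambda>x. complex_of_real (f x) powr c x) \<in> borel_measurable M"
proof -
  have [measurable]: "(\<lambda>x. Ln (complex_of_real (f x))) \<in> borel_measurable M"
    using measurable_comp[OF assms(1) borel_measurable_Ln_of_real] by (simp add: comp_def)
  show ?thesis unfolding powr_def by measurable
qed

lemma has_integral_powr_of_real_unit_interval:
  fixes c :: complex assumes "Re c > 0"
  shows "((\<lambda>t. complex_of_real t powr (c - 1)) has_integral 1 / c) {0..1}"
proof -
  have "((\<lambda>t. complex_of_real t powr (c - 1)) has_integral
          (of_real 1 powr c / c - of_real 0 powr c / c)) {0..1}"
    using assms
    by (intro fundamental_theorem_of_calculus_interior)
       (auto intro!: continuous_intros derivative_eq_intros has_vector_derivative_real_field)
  then show ?thesis using assms by auto
qed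

lemma lborel_integral_powr_of_real_unit_interval:
  fixes c :: complex assumes c: "Re c > 0"
  shows "set_integrable lborel {0..1} (\<lambda>t. complex_of_real t powr (c - 1))"
    and "(LINT t:{0..1}|lborel. complex_of_real t powr (c - 1)) = 1 / c"
proof -
  let ?f = "\<lambda>t. complex_of_real t powr (c - 1)"
  have "?f absolutely_integrable_on {0..1}"
  proof (rule absolutely_integrable_onI)
    show "?f integrable_on {0..1}"
      using has_integral_powr_of_real_unit_interval[OF c] by blast
    have "(\<lambda>t. t powr (Re c - 1)) integrable_on {0..1}"
      using c by (intro integrable_on_powr_from_0) auto
    then show "(\<lambda>t. norm (?f t)) integrable_on {0..1}"
      by (rule integrable_eq) (simp add: norm_powr_real_powr)
  qed
  then show int: "set_integrable lborel {0..1} ?f"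
    unfolding set_integrable_def
    by (subst integrable_completion[symmetric]) measurable
  show "(LINT t:{0..1}|lborel. ?f t) = 1 / c"
    using set_borel_integral_eq_integral(2)[OF int] has_integral_powr_of_real_unit_interval[OF c]
    by (simp add: integral_unique)
qed

lemma powr_of_real_prod:
  fixes x :: "'a \<Rightarrow> real"
  assumes "\<And>i. i \<in> I \<Longrightarrow> x i \<ge> 0"
  shows "complex_of_real (\<Prod>i\<in>I. x i) powr c = (\<Prod>i\<in>I. complex_of_real (x i) powr c)"
  using assms
proof (induction I rule: infinite_finite_induct)
  case (insert j I)
  have "complex_of_real (\<Prod>i\<in>insert j I. x i) powr c
        = (complex_of_real (x j) * complex_of_real (\<Prod>i\<in>I. x i)) powr c"
    using insert by simp
  also have "\<dots> = complex_of_real (x j) powr c * complex_of_real (\<Prod>i\<in>I. x i) powr c"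
    using insert by (intro powr_times_real) (auto simp del: of_real_prod intro!: prod_nonneg)
  finally show ?case using insert by simp
qed auto

section \<open>Integrals over the unit cube\<close>

definition cube_prod :: "nat \<Rightarrow> (nat \<Rightarrow> real) \<Rightarrow> real" where
  "cube_prod s x = (\<Prod>i\<in>{1..s+1}. x i)"

lemma borel_measurable_cube_prod [measurable]: "cube_prod s \<in> borel_measurable (cube_measure s)"
  unfolding cube_prod_def cube_measure_def by measurable

lemma sets_unit_cube [measurable]: "unit_cube s \<in> sets (cube_measure s)"
  unfolding unit_cube_def cube_measure_def by (rule sets_PiM_I_finite) auto

lemma cube_prod_nonneg: "x \<in> unit_cube s \<Longrightarrow> cube_prod s x \<ge> 0"
  unfolding cube_prod_def unit_cube_def by (intro prod_nonneg) (auto simp: PiE_iff)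

lemma cube_prod_le_one: "x \<in> unit_cube s \<Longrightarrow> cube_prod s x \<le> 1"
  unfolding cube_prod_def unit_cube_def by (intro prod_le_1) (auto simp: PiE_iff)

interpretation lborel_product: product_sigma_finite "\<lambda>_::nat. lborel :: real measure"
  by unfold_locales

lemma sigma_finite_cube_measure: "sigma_finite_measure (cube_measure s)"
  unfolding cube_measure_def by (rule lborel_product.sigma_finite) simp

lemma cube_integral_powr:
  fixes c :: complex assumes c: "Re c > 0"
  shows "set_integrable (cube_measure s) (unit_cube s) (\<lambda>x. complex_of_real (cube_prod s x) powr (c - 1))"
    and "(LINT x:unit_cube s|cube_measure s. complex_of_real (cube_prod s x) powr (c - 1)) = 1 / c ^ (s+1)"
proof -
  let ?g = "\<lambda>i::nat. \<lambda>t. indicator {0..1} t *\<^sub>R complex_of_real t powr (c - 1)"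
  have factor: "indicator (unit_cube s) x *\<^sub>R complex_of_real (cube_prod s x) powr (c - 1)
       = (\<Prod>i\<in>{1..s+1}. ?g i (x i))" if "x \<in> space (cube_measure s)" for x
  proof (cases "x \<in> unit_cube s")
    case True
    then have "\<And>i. i \<in> {1..s+1} \<Longrightarrow> x i \<in> {0..1}" by (auto simp: unit_cube_def)
    then show ?thesis
      using True unfolding cube_prod_def by (subst powr_of_real_prod) (auto intro!: prod.cong)
  next
    case False
    with that obtain i where "i \<in> {1..s+1}" "x i \<notin> {0..1}"
      by (auto simp: unit_cube_def cube_measure_def space_PiM PiE_iff)
    then have "(\<Prod>j\<in>{1..s+1}. ?g j (x j)) = 0"
      by (intro prod_zero bexI[of _ i]) auto
    then show ?thesis using False by simp
  qed
  have int1: "integrable lborel (?g i)" for i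
    using lborel_integral_powr_of_real_unit_interval(1)[OF c] by (simp add: set_integrable_def)
  have "integrable (cube_measure s) (\<lambda>x. \<Prod>i\<in>{1..s+1}. ?g i (x i))"
    unfolding cube_measure_def by (rule lborel_product.product_integrable_prod) (auto intro: int1)
  then show "set_integrable (cube_measure s) (unit_cube s) (\<lambda>x. complex_of_real (cube_prod s x) powr (c - 1))"
    unfolding set_integrable_def by (rule Bochner_Integration.integrable_cong[OF refl, THEN iffD2, rotated]) (rule factor)
  have "(LINT x:unit_cube s|cube_measure s. complex_of_real (cube_prod s x) powr (c - 1))
      = integral\<^sup>L (cube_measure s) (\<lambda>x. \<Prod>i\<in>{1..s+1}. ?g i (x i))"
    unfolding set_lebesgue_integral_def by (rule Bochner_Integration.integral_cong[OF refl factor])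
  also have "\<dots> = (\<Prod>i\<in>{1..s+1}. integral\<^sup>L lborel (?g i))"
    unfolding cube_measure_def by (rule lborel_product.product_integral_prod) (auto intro: int1)
  also have "\<dots> = 1 / c ^ (s+1)"
    using lborel_integral_powr_of_real_unit_interval(2)[OF c]
    by (simp add: set_lebesgue_integral_def power_one_over)
  finally show "(LINT x:unit_cube s|cube_measure s. complex_of_real (cube_prod s x) powr (c - 1)) = 1 / c ^ (s+1)" .
qed

lemma nn_integral_eq_of_complex_integral:
  fixes f :: "'a \<Rightarrow> real"
  assumes "integrable M (\<lambda>x. complex_of_real (f x))"
    and "integral\<^sup>L M (\<lambda>x. complex_of_real (f x)) = complex_of_real v"
    and "AE x in M. 0 \<le> f x"
  shows "(\<integral>\<^sup>+x. ennreal (f x) \<partial>M) = ennreal v"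
proof -
  have "integrable M f" using assms(1) by (rule complex_of_real_integrable_eq[THEN iffD1])
  moreover have "integral\<^sup>L M f = v"
    using assms(2) by (simp only: integral_complex_of_real of_real_eq_iff)
  ultimately show ?thesis using assms(3) by (simp add: nn_integral_eq_integral)
qed

lemma cube_nn_integral_powr:
  fixes \<gamma> :: real assumes "\<gamma> > 0"
  shows "(\<integral>\<^sup>+x. ennreal (indicator (unit_cube s) x * cube_prod s x powr (\<gamma> - 1)) \<partial>cube_measure s)
         = ennreal (1 / \<gamma> ^ (s+1))"
proof (rule nn_integral_eq_of_complex_integral)
  have "indicator (unit_cube s) x *\<^sub>R complex_of_real (cube_prod s x) powr (complex_of_real \<gamma> - 1)
        = complex_of_real (indicator (unit_cube s) x * cube_prod s x powr (\<gamma> - 1))" for x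
    by (cases "x \<in> unit_cube s") (simp_all add: cube_prod_nonneg flip: powr_of_real)
  then show "integrable (cube_measure s) (\<lambda>x. complex_of_real (indicator (unit_cube s) x * cube_prod s x powr (\<gamma> - 1)))"
    and "integral\<^sup>L (cube_measure s) (\<lambda>x. complex_of_real (indicator (unit_cube s) x * cube_prod s x powr (\<gamma> - 1)))
         = complex_of_real (1 / \<gamma> ^ (s+1))"
    using cube_integral_powr[of "complex_of_real \<gamma>" s] assms
    by (simp_all add: set_integrable_def set_lebesgue_integral_def)
qed simp

lemma AE_cube_measure_coord_neq:
  assumes "i \<in> {1..s+1}"
  shows "AE x in cube_measure s. x i \<noteq> c"
proof -
  interpret finite_product_sigma_finite "\<lambda>_::nat. lborel :: real measure" "{1..s+1}"
    by unfold_locales auto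
  let ?N = "PiE {1..s+1} (\<lambda>j. if j = i then {c} else UNIV)"
  have "emeasure (cube_measure s) ?N = (\<Prod>j\<in>{1..s+1}. emeasure lborel (if j = i then {c} else UNIV))"
    unfolding cube_measure_def by (rule measure_times) auto
  also have "\<dots> = 0"
    using assms by (intro prod_zero bexI[of _ i]) auto
  finally have "?N \<in> null_sets (cube_measure s)"
    by (auto simp: null_sets_def cube_measure_def intro!: sets_PiM_I_finite)
  moreover have "{x \<in> space (cube_measure s). \<not> x i \<noteq> c} \<subseteq> ?N"
  proof
    fix x assume "x \<in> {x \<in> space (cube_measure s). \<not> x i \<noteq> c}"
    then have "x \<in> PiE {1..s+1} (\<lambda>_. UNIV)" "x i = c"
      by (auto simp: cube_measure_def space_PiM)
    then show "x \<in> ?N" unfolding PiE_iff by auto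
  qed
  ultimately show ?thesis by (rule AE_I')
qed

lemma AE_cube_prod_bounds:
  "AE x in cube_measure s. x \<in> unit_cube s \<longrightarrow> 0 < cube_prod s x \<and> cube_prod s x < 1"
proof -
  have "AE x in cube_measure s. \<forall>i\<in>{1..s+1}. x i \<noteq> 0 \<and> x i \<noteq> 1"
    by (intro AE_finite_allI) (auto intro: AE_cube_measure_coord_neq)
  then show ?thesis
  proof eventually_elim
    case (elim x)
    show ?case
    proof
      assume "x \<in> unit_cube s"
      then have "\<And>i. i \<in> {1..s+1} \<Longrightarrow> 0 \<le> x i \<and> x i \<le> 1"
        by (auto simp: unit_cube_def PiE_iff)
      with elim have x: "\<And>i. i \<in> {1..s+1} \<Longrightarrow> 0 < x i \<and> x i < 1"
        by (metis order_le_neq_trans order_neq_le_trans)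
      have "0 < cube_prod s x" unfolding cube_prod_def using x by (intro prod_pos) blast
      moreover have "cube_prod s x < (\<Prod>i\<in>{1..s+1}. 1)"
        unfolding cube_prod_def
        by (rule prod_mono_strict[of 1]) (use x in \<open>auto intro: less_imp_le\<close>)
      ultimately show "0 < cube_prod s x \<and> cube_prod s x < 1" by simp
    qed
  qed
qed

lemma has_bochner_integral_powr_Ici:
  fixes p :: real assumes p: "0 < p" "p < 1"
  shows "has_bochner_integral lborel (\<lambda>u. indicator {0..} u * p powr u) (1 / (- ln p))"
proof (rule has_bochner_integral_nn_integral)
  have lnp: "ln p < 0" using p by simp
  have "(\<integral>\<^sup>+u. ennreal (p powr u) * indicator {0..} u \<partial>lborel) = 0 - p powr 0 / ln p"
  proof (rule nn_integral_FTC_atLeast[where F="\<lambda>u. p powr u / ln p"])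
    show "\<And>x. 0 \<le> x \<Longrightarrow> ((\<lambda>u. p powr u / ln p) has_real_derivative p powr x) (at x)"
      using p lnp by (auto intro!: derivative_eq_intros)
    have "((\<lambda>u. exp (ln p * u)) \<longlongrightarrow> 0) at_top"
      by (rule exp_at_bot[THEN filterlim_compose],
          rule filterlim_tendsto_neg_mult_at_bot[OF tendsto_const lnp filterlim_ident])
    then show "((\<lambda>u. p powr u / ln p) \<longlongrightarrow> 0) at_top"
      using p by (simp add: powr_def mult.commute tendsto_divide_zero)
  qed auto
  moreover have "ennreal (indicator {0..} u * p powr u) = ennreal (p powr u) * indicator {0..} u" for u
    by (auto split: split_indicator)
  ultimately show "(\<integral>\<^sup>+u. ennreal (indicator {0..} u * p powr u) \<partial>lborel) = ennreal (1 / (- ln p))"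
    using p by simp
qed (use p in auto)

lemma has_field_derivative_neg_inverse_power:
  fixes w c :: "'a::{real_normed_field, field_char_0}"
  assumes "c + w \<noteq> 0" and "s \<ge> 1"
  shows "((\<lambda>z. - 1 / (of_nat s * (c + z) ^ s)) has_field_derivative 1 / (c + w) ^ (s+1)) (at w within S)"
proof -
  have eq: "(\<lambda>z. - 1 / (of_nat s * (c + z) ^ s)) = (\<lambda>z. - (1 / of_nat s) * power_int (c + z) (- int s))"
    by (auto simp: fun_eq_iff power_int_minus field_simps)
  have "((\<lambda>z. - (1 / of_nat s) * power_int (c + z) (- int s)) has_field_derivative
          - (1 / of_nat s) * (of_int (- int s) * power_int (c + w) (- int s - 1) * (0 + 1))) (at w within S)"
    using assms by (intro DERIV_cmult DERIV_power_int DERIV_add[OF DERIV_const DERIV_ident]) auto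
  also have "- (1 / of_nat s) * (of_int (- int s) * power_int (c + w) (- int s - 1) * (0 + 1))
             = power_int (c + w) (- int (s+1))"
    using assms by (simp add: field_simps) (rule arg_cong[where f="power_int (c+w)"], simp)
  also have "\<dots> = 1 / (c + w) ^ (s+1)"
    unfolding power_int_minus power_int_of_nat by (simp add: divide_inverse)
  finally show ?thesis unfolding eq .
qed

lemma nn_integral_inverse_power_Ici:
  fixes \<beta> :: real assumes b: "\<beta> > 0" and s: "s \<ge> 1"
  shows "(\<integral>\<^sup>+u. ennreal (1 / (\<beta> + u) ^ (s+1)) * indicator {0..} u \<partial>lborel) = ennreal (1 / (real s * \<beta> ^ s))"
proof -
  have "(\<integral>\<^sup>+u. ennreal (1 / (\<beta> + u) ^ (s+1)) * indicator {0..} u \<partial>lborel) = 0 - (- 1 / (real s * (\<beta> + 0) ^ s))"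
  proof (rule nn_integral_FTC_atLeast[where F="\<lambda>u. - 1 / (real s * (\<beta> + u) ^ s)"])
    fix x :: real assume "0 \<le> x"
    then show "((\<lambda>u. - 1 / (real s * (\<beta> + u) ^ s)) has_real_derivative 1 / (\<beta> + x) ^ (s+1)) (at x)"
      using has_field_derivative_neg_inverse_power[of \<beta> x s UNIV] b s by simp
  next
    have "filterlim (\<lambda>u. real s * (\<beta> + u) ^ s) at_top at_top"
      using s by (intro filterlim_tendsto_pos_mult_at_top[OF tendsto_const] filterlim_pow_at_top
                   filterlim_tendsto_add_at_top[OF tendsto_const filterlim_ident]) auto
    then have "((\<lambda>u. 1 / (real s * (\<beta> + u) ^ s)) \<longlongrightarrow> 0) at_top"
      by (simp add: tendsto_divide_0[OF tendsto_const] filterlim_at_top_imp_at_infinity)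
    then show "((\<lambda>u. - 1 / (real s * (\<beta> + u) ^ s)) \<longlongrightarrow> 0) at_top"
      using tendsto_minus by fastforce
  qed (use b in auto)
  then show ?thesis by simp
qed

lemma tendsto_neg_inverse_power_at_top:
  fixes b :: complex assumes "s \<ge> 1"
  shows "((\<lambda>u::real. - 1 / (of_nat s * (b + complex_of_real u) ^ s)) \<longlongrightarrow> 0) at_top"
proof -
  have le: "Re b + u \<le> norm (b + complex_of_real u)" for u
    using complex_Re_le_cmod[of "b + complex_of_real u"] by simp
  have "filterlim (\<lambda>u. Re b + u) at_top at_top"
    by (rule filterlim_tendsto_add_at_top[OF tendsto_const filterlim_ident])
  moreover have "\<forall>\<^sub>F u in at_top. Re b + u \<le> norm (b + complex_of_real u)"
    by (rule always_eventually) (use le in blast)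
  ultimately have "filterlim (\<lambda>u. norm (b + complex_of_real u)) at_top at_top"
    by (rule filterlim_at_top_mono)
  then have "filterlim (\<lambda>u. b + complex_of_real u) at_infinity at_top"
    by (simp add: filterlim_at_infinity_conv_norm_at_top)
  then have "((\<lambda>u. inverse (b + complex_of_real u)) \<longlongrightarrow> 0) at_top"
    by (rule filterlim_compose[OF tendsto_inverse_0])
  then have "((\<lambda>u. - (1 / of_nat s) * inverse (b + complex_of_real u) ^ s)
              \<longlongrightarrow> - (1 / of_nat s) * 0 ^ s) at_top"
    by (intro tendsto_intros)
  moreover have "(0::complex) ^ s = 0" using assms by simp
  ultimately show ?thesis by (simp add: field_simps)
qed

lemma set_integrable_inverse_power_Ici:
  fixes b :: complex assumes b: "Re b > 0" and s: "s \<ge> 1"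
  shows "set_integrable lborel {0..} (\<lambda>u. 1 / (b + of_real u) ^ (s+1))"
proof -
  let ?f = "\<lambda>u. 1 / (b + of_real u) ^ (s+1)"
  let ?g = "\<lambda>u. 1 / (Re b + u) ^ (s+1)"
  have "integrable lborel (\<lambda>u. indicator {0..} u * ?g u)"
  proof (rule integrableI_nn_integral_finite)
    have "ennreal (indicator {0..} u * ?g u) = ennreal (?g u) * indicator {0..} u" for u
      by (auto split: split_indicator)
    then show "(\<integral>\<^sup>+u. ennreal (indicator {0..} u * ?g u) \<partial>lborel) = ennreal (1 / (real s * Re b ^ s))"
      using nn_integral_inverse_power_Ici[OF b s] by simp
    show "AE u in lborel. 0 \<le> indicator {0..} u * ?g u"
      using b by (auto split: split_indicator)
  qed measurable
  then have "set_integrable lborel {0..} ?g"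
    by (simp add: set_integrable_def)
  then show ?thesis
  proof (rule set_integrable_bound)
    show "set_borel_measurable lborel {0..} ?f"
      unfolding set_borel_measurable_def by measurable
    have "norm (?f u) \<le> ?g u" if "u \<ge> 0" for u
    proof -
      have "0 < Re b + u" using b that by simp
      moreover have "Re b + u \<le> norm (b + of_real u)"
        using complex_Re_le_cmod[of "b + of_real u"] by simp
      ultimately have "(Re b + u) ^ (s+1) \<le> norm (b + of_real u) ^ (s+1)"
        by (intro power_mono) auto
      with \<open>0 < Re b + u\<close> show ?thesis
        unfolding norm_divide norm_power norm_one by (intro frac_le) auto
    qed
    moreover have "norm (?g u) = ?g u" if "u \<ge> 0" for u
      using b that by (intro real_norm_def[THEN trans] abs_of_nonneg) simp
    ultimately show "AE u in lborel. u \<in> {0..} \<longrightarrow> norm (?f u) \<le> norm (?g u)"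
      by (intro AE_I2) simp
  qed
qed

lemma lborel_integral_inverse_power_Ici:
  fixes b :: complex assumes b: "Re b > 0" and s: "s \<ge> 1"
  shows "(LINT u:{0..}|lborel. 1 / (b + of_real u) ^ (s+1)) = 1 / (of_nat s * b ^ s)"
proof -
  let ?f = "\<lambda>u. 1 / (b + of_real u) ^ (s+1)"
  have nz: "b + of_real u \<noteq> 0" if "u \<ge> 0" for u
    using b that by (auto simp: complex_eq_iff)
  note int = set_integrable_inverse_power_Ici[OF b s]
  define F where "F u = - 1 / (of_nat s * (b + complex_of_real u) ^ s)" for u
  have FTC: "(LBINT u=0..\<infinity>. ?f u) = 0 - F 0"
  proof (rule interval_integral_FTC_integrable[where F=F])
    fix x assume "0 < ereal x" "ereal x < \<infinity>"
    then have "x \<ge> 0" by simp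
    have "((\<lambda>z. - 1 / (of_nat s * (b + z) ^ s)) has_field_derivative ?f x) (at (of_real x))"
      using has_field_derivative_neg_inverse_power[of b "of_real x" s UNIV] nz[OF \<open>x \<ge> 0\<close>] s
      by simp
    then show "(F has_vector_derivative ?f x) (at x)"
      unfolding F_def by (rule has_vector_derivative_real_field)
    show "isCont ?f x" using nz[OF \<open>x \<ge> 0\<close>] by (intro continuous_intros) auto
  next
    have ei: "einterval 0 \<infinity> = {0::real<..}" by (auto simp: einterval_iff)
    show "set_integrable lborel (einterval 0 \<infinity>) ?f"
      unfolding ei by (rule set_integrable_subset[OF int]) auto
    have "isCont F 0" unfolding F_def using nz[of 0] s by (intro continuous_intros) auto
    then have "(F \<longlongrightarrow> F 0) (at_right 0)"
      by (auto simp: isCont_def intro: tendsto_mono at_le)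
    then show "((F \<circ> real_of_ereal) \<longlongrightarrow> F 0) (at_right 0)"
      unfolding zero_ereal_def ereal_tendsto_simps .
    show "((F \<circ> real_of_ereal) \<longlongrightarrow> 0) (at_left \<infinity>)"
      unfolding ereal_tendsto_simps F_def by (rule tendsto_neg_inverse_power_at_top[OF s])
  qed simp
  have "(LINT u:{0..}|lborel. ?f u) = (LINT u:{0<..}|lborel. ?f u)"
    by (rule set_integral_discrete_difference[where X="{0}"]) auto
  also have "\<dots> = (LBINT u=0..\<infinity>. ?f u)"
    using interval_integral_Ioi[of 0 ?f] by (simp add: zero_ereal_def)
  also note FTC
  finally show "(LINT u:{0..}|lborel. ?f u) = 1 / (of_nat s * b ^ s)"
    by (simp add: F_def)
qed

section \<open>The logarithmic kernel\<close>

definition cube_log_kernel :: "nat \<Rightarrow> complex \<Rightarrow> (nat \<Rightarrow> real) \<Rightarrow> complex" where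
  "cube_log_kernel s b x = indicator (unit_cube s) x *\<^sub>R
     (complex_of_real (cube_prod s x) powr (b - 1) / complex_of_real (- ln (cube_prod s x)))"

lemma borel_measurable_cube_log_kernel [measurable]:
  "cube_log_kernel s b \<in> borel_measurable (cube_measure s)"
  unfolding cube_log_kernel_def by measurable

text \<open>Integrating over u gives the kernel, integrating over the cube gives (b+u)^-(s+1);
  Fubini for this function is the core of the proof.\<close>
definition log_kernel_integrand :: "nat \<Rightarrow> complex \<Rightarrow> (nat \<Rightarrow> real) \<Rightarrow> real \<Rightarrow> complex" where
  "log_kernel_integrand s b x u = indicator (unit_cube s) x *\<^sub>R indicator {0..} u *\<^sub>R
     complex_of_real (cube_prod s x) powr (b + complex_of_real u - 1)"

interpretation cube_lborel: pair_sigma_finite "cube_measure s" "lborel :: real measure" for s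
  by (intro pair_sigma_finite.intro sigma_finite_cube_measure lborel.sigma_finite_measure_axioms)

lemma borel_measurable_log_kernel_integrand [measurable]:
  "(\<lambda>(x, u). log_kernel_integrand s b x u) \<in> borel_measurable (cube_measure s \<Otimes>\<^sub>M lborel)"
  unfolding log_kernel_integrand_def by measurable

lemma integrable_log_kernel_integrand:
  assumes b: "Re b > 0" and s: "s \<ge> 1"
  shows "integrable (cube_measure s \<Otimes>\<^sub>M lborel) (\<lambda>(x, u). log_kernel_integrand s b x u)"
proof -
  have norm_eq: "norm (log_kernel_integrand s b x u)
      = indicator {0..} u * (indicator (unit_cube s) x * cube_prod s x powr ((Re b + u) - 1))" for x u
    unfolding log_kernel_integrand_def using cube_prod_nonneg[of x s]
    by (auto simp: indicator_def norm_powr_real_powr)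
  have inner: "(\<integral>\<^sup>+x. ennreal (norm (log_kernel_integrand s b x u)) \<partial>cube_measure s)
      = ennreal (1 / (Re b + u) ^ (s+1)) * indicator {0..} u" for u
  proof (cases "u \<ge> 0")
    case True
    then show ?thesis
      using cube_nn_integral_powr[of "Re b + u" s] b by (simp add: norm_eq)
  qed (simp add: norm_eq)
  have "(\<integral>\<^sup>+p. ennreal (norm (case_prod (log_kernel_integrand s b) p)) \<partial>(cube_measure s \<Otimes>\<^sub>M lborel))
      = (\<integral>\<^sup>+u. (\<integral>\<^sup>+x. ennreal (norm (log_kernel_integrand s b x u)) \<partial>cube_measure s) \<partial>lborel)"
    by (subst cube_lborel.nn_integral_snd[symmetric]) auto
  also have "\<dots> = ennreal (1 / (real s * Re b ^ s))"
    unfolding inner by (rule nn_integral_inverse_power_Ici[OF b s])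
  finally show ?thesis
    by (intro integrableI_bounded) auto
qed

lemma cube_integral_log_kernel_integrand:
  assumes "Re b > 0"
  shows "(\<integral>x. log_kernel_integrand s b x u \<partial>cube_measure s) = indicator {0..} u *\<^sub>R (1 / (b + of_real u) ^ (s+1))"
proof (cases "u \<ge> 0")
  case True
  then have "Re (b + of_real u) > 0" using assms by simp
  then show ?thesis
    using True cube_integral_powr(2)[of "b + of_real u" s]
    by (simp add: log_kernel_integrand_def set_lebesgue_integral_def)
qed (simp add: log_kernel_integrand_def)

lemma AE_lborel_integral_log_kernel_integrand:
  "AE x in cube_measure s. (\<integral>u. log_kernel_integrand s b x u \<partial>lborel) = cube_log_kernel s b x"
  using AE_cube_prod_bounds[of s]
proof eventually_elim
  case (elim x)
  show ?case
  proof (cases "x \<in> unit_cube s")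
    case True
    with elim have P: "0 < cube_prod s x" "cube_prod s x < 1" by auto
    let ?p = "complex_of_real (cube_prod s x)"
    have "log_kernel_integrand s b x u
          = ?p powr (b - 1) * complex_of_real (indicator {0..} u * cube_prod s x powr u)" for u
    proof -
      have "?p powr (b + complex_of_real u - 1) = ?p powr ((b - 1) + complex_of_real u)"
        by (simp add: algebra_simps)
      also have "\<dots> = ?p powr (b - 1) * complex_of_real (cube_prod s x powr u)"
        using P by (simp add: powr_add powr_of_real)
      finally show ?thesis using True by (simp add: log_kernel_integrand_def indicator_def)
    qed
    then have "(\<integral>u. log_kernel_integrand s b x u \<partial>lborel)
        = ?p powr (b - 1) * complex_of_real (\<integral>u. indicator {0..} u * cube_prod s x powr u \<partial>lborel)"
      by (simp only: integral_mult_right_zero integral_complex_of_real)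
    also have "(\<integral>u. indicator {0..} u * cube_prod s x powr u \<partial>lborel) = 1 / (- ln (cube_prod s x))"
      using has_bochner_integral_powr_Ici[OF P] by (rule has_bochner_integral_integral_eq)
    finally show ?thesis using True by (simp add: cube_log_kernel_def divide_inverse)
  qed (simp add: log_kernel_integrand_def cube_log_kernel_def)
qed

lemma cube_integral_log_kernel:
  assumes b: "Re b > 0" and s: "s \<ge> 1"
  shows "integrable (cube_measure s) (cube_log_kernel s b)"
    and "integral\<^sup>L (cube_measure s) (cube_log_kernel s b) = 1 / (of_nat s * b ^ s)"
proof -
  note int = integrable_log_kernel_integrand[OF b s]
  have "integrable (cube_measure s) (\<lambda>x. \<integral>u. log_kernel_integrand s b x u \<partial>lborel)"
    by (rule cube_lborel.integrable_fst[OF int])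
  then show "integrable (cube_measure s) (cube_log_kernel s b)"
    by (rule integrable_cong_AE_imp) (use AE_lborel_integral_log_kernel_integrand in auto)
  have "AE x in cube_measure s. cube_log_kernel s b x = (\<integral>u. log_kernel_integrand s b x u \<partial>lborel)"
    using AE_lborel_integral_log_kernel_integrand[of s b] by (rule eventually_mono) simp
  then have "integral\<^sup>L (cube_measure s) (cube_log_kernel s b)
      = (\<integral>x. (\<integral>u. log_kernel_integrand s b x u \<partial>lborel) \<partial>cube_measure s)"
    by (rule integral_cong_AE[rotated 2]) auto
  also have "\<dots> = (\<integral>u. (\<integral>x. log_kernel_integrand s b x u \<partial>cube_measure s) \<partial>lborel)"
    using cube_lborel.integral_fst[OF int] cube_lborel.integral_snd[OF int] by simp
  also have "\<dots> = (LINT u:{0..}|lborel. 1 / (b + of_real u) ^ (s+1))"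
    by (simp add: cube_integral_log_kernel_integrand[OF b] set_lebesgue_integral_def)
  also have "\<dots> = 1 / (of_nat s * b ^ s)"
    by (rule lborel_integral_inverse_power_Ici[OF b s])
  finally show "integral\<^sup>L (cube_measure s) (cube_log_kernel s b) = 1 / (of_nat s * b ^ s)" .
qed

lemma cube_nn_integral_log_kernel:
  fixes t :: real assumes "t > 0" and "s \<ge> 1"
  shows "(\<integral>\<^sup>+x. ennreal (indicator (unit_cube s) x * (cube_prod s x powr (t - 1) / - ln (cube_prod s x)))
           \<partial>cube_measure s) = ennreal (1 / (real s * t ^ s))"
proof (rule nn_integral_eq_of_complex_integral)
  let ?f = "\<lambda>x. indicator (unit_cube s) x * (cube_prod s x powr (t - 1) / - ln (cube_prod s x))"
  have kernel_eq: "cube_log_kernel s (of_real t) = (\<lambda>x. complex_of_real (?f x))"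
  proof
    fix x show "cube_log_kernel s (of_real t) x = complex_of_real (?f x)"
      by (cases "x \<in> unit_cube s") (simp_all add: cube_log_kernel_def cube_prod_nonneg flip: powr_of_real)
  qed
  show "integrable (cube_measure s) (\<lambda>x. complex_of_real (?f x))"
    using cube_integral_log_kernel(1)[of "of_real t" s] assms unfolding kernel_eq by simp
  show "integral\<^sup>L (cube_measure s) (\<lambda>x. complex_of_real (?f x)) = complex_of_real (1 / (real s * t ^ s))"
    using cube_integral_log_kernel(2)[of "of_real t" s] assms unfolding kernel_eq by simp
  have "?f x \<ge> 0" for x
  proof (cases "x \<in> unit_cube s")
    case True
    then have "- ln (cube_prod s x) \<ge> 0"
      using cube_prod_nonneg[OF True] cube_prod_le_one[OF True]
      by (cases "cube_prod s x = 0") simp_all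
    then show ?thesis by (simp add: divide_nonneg_nonpos)
  qed simp
  then show "AE x in cube_measure s. 0 \<le> ?f x" by simp
qed

section \<open>The Lerch integrand\<close>

lemma filterlim_power_div_power_at_top:
  fixes r A :: real
  shows "r > 1 \<Longrightarrow> A > 0 \<Longrightarrow> filterlim (\<lambda>k::nat. r ^ k / (real k + A) ^ s) at_top at_top"
  by real_asymp

lemma norm_le_one_if_summable_lerch_series:
  fixes z a :: complex
  assumes "summable (\<lambda>k. z ^ k / (of_nat k + a) ^ s)"
  shows "norm z \<le> 1"
proof (rule ccontr)
  assume "\<not> norm z \<le> 1"
  define A where "A = norm a + 1"
  have A: "A > 0" unfolding A_def by (simp add: add_nonneg_pos)
  have "eventually (\<lambda>k. norm z ^ k / (real k + A) ^ s \<le> norm (z ^ k / (of_nat k + a) ^ s)) at_top"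
    using eventually_gt_at_top[of "nat \<lceil>norm a\<rceil>"]
  proof eventually_elim
    case (elim k)
    have "norm a < real k" using elim by linarith
    then have pos: "norm (of_nat k + a) > 0"
      using norm_triangle_ineq2[of "of_nat k" "-a"] by auto
    have "norm (of_nat k + a) \<le> real k + A"
      using norm_triangle_ineq[of "of_nat k" a] by (simp add: A_def)
    then have "norm (of_nat k + a) ^ s \<le> (real k + A) ^ s"
      using pos by (intro power_mono) auto
    then show ?case
      using pos by (simp add: norm_divide norm_power frac_le)
  qed
  with filterlim_power_div_power_at_top[of "norm z" A s] A \<open>\<not> norm z \<le> 1\<close>
  have "filterlim (\<lambda>k. norm (z ^ k / (of_nat k + a) ^ s)) at_top at_top"
    by (auto intro: filterlim_at_top_mono)
  moreover have "(\<lambda>k. norm (z ^ k / (of_nat k + a) ^ s)) \<longlonglongrightarrow> 0"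
    using summable_LIMSEQ_zero[OF assms] by (rule tendsto_norm_zero)
  ultimately show False
    by (intro not_tendsto_and_filterlim_at_infinity[OF trivial_limit_sequentially])
       (auto intro: filterlim_at_top_imp_at_infinity)
qed

definition lerch_integrand :: "nat \<Rightarrow> complex \<Rightarrow> complex \<Rightarrow> (nat \<Rightarrow> real) \<Rightarrow> complex" where
  "lerch_integrand s z a x = (- of_nat s * complex_of_real (cube_prod s x) powr (a - 1))
     / ((1 - z * complex_of_real (cube_prod s x)) * complex_of_real (ln (cube_prod s x)))"

lemma borel_measurable_lerch_integrand [measurable]:
  "lerch_integrand s z a \<in> borel_measurable (cube_measure s)"
  unfolding lerch_integrand_def by measurable

lemma lerch_integrand_eq_log_kernel:
  "indicator (unit_cube s) x *\<^sub>R lerch_integrand s z a x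
   = of_nat s * cube_log_kernel s a x / (1 - z * complex_of_real (cube_prod s x))"
  by (cases "x \<in> unit_cube s")
     (simp_all add: lerch_integrand_def cube_log_kernel_def divide_divide_eq_left mult.commute)

lemma cube_log_kernel_shift:
  assumes "0 < cube_prod s x"
  shows "cube_log_kernel s (of_nat k + a) x = complex_of_real (cube_prod s x) ^ k * cube_log_kernel s a x"
proof -
  have "complex_of_real (cube_prod s x) powr (of_nat k + a - 1)
        = complex_of_real (cube_prod s x) ^ k * complex_of_real (cube_prod s x) powr (a - 1)"
    using assms by (simp add: powr_add add_diff_eq[symmetric])
  then show ?thesis by (simp add: cube_log_kernel_def)
qed

lemma norm_cube_log_kernel:
  assumes "x \<in> unit_cube s" "0 < cube_prod s x"
  shows "norm (cube_log_kernel s a x) = cube_prod s x powr (Re a - 1) / - ln (cube_prod s x)"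
  using assms cube_prod_le_one[of x s]
  by (simp add: cube_log_kernel_def norm_divide norm_powr_real_powr)

lemma norm_mult_of_real_less_one:
  fixes z :: complex and p :: real
  assumes "norm z \<le> 1" "0 \<le> p" "p < 1"
  shows "norm (z * complex_of_real p) < 1"
proof -
  have "norm (z * complex_of_real p) = norm z * p"
    using assms(2) by (simp add: norm_mult)
  also have "\<dots> \<le> p"
    using assms by (intro mult_left_le_one_le) auto
  finally show ?thesis using assms(3) by linarith
qed

lemma norm_lerch_integrand_lower_bound:
  assumes s: "s \<ge> 1" and z: "norm z \<le> 1" and t: "Re a \<le> t"
    and x: "x \<in> unit_cube s" "0 < cube_prod s x" "cube_prod s x < 1"
  shows "real s / 2 * (cube_prod s x powr (t - 1) / - ln (cube_prod s x))
         \<le> norm (indicator (unit_cube s) x *\<^sub>R lerch_integrand s z a x)"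
proof -
  let ?P = "cube_prod s x"
  have zP: "norm (z * complex_of_real ?P) < 1"
    using z x by (intro norm_mult_of_real_less_one) auto
  have "0 < 1 - norm (z * complex_of_real ?P)"
    using zP by linarith
  also have "\<dots> \<le> norm (1 - z * complex_of_real ?P)"
    using norm_triangle_ineq2[of 1 "z * complex_of_real ?P"] by simp
  finally have denom_pos: "0 < norm (1 - z * complex_of_real ?P)" .
  have denom_le: "norm (1 - z * complex_of_real ?P) \<le> 2"
    using norm_triangle_ineq4[of 1 "z * complex_of_real ?P"] zP by simp
  have "?P powr (t - 1) / - ln ?P \<le> ?P powr (Re a - 1) / - ln ?P"
    using x t by (intro divide_right_mono powr_mono') auto
  also have "\<dots> = norm (cube_log_kernel s a x)"
    using x by (simp add: norm_cube_log_kernel)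
  finally have "real s / 2 * (?P powr (t - 1) / - ln ?P) \<le> real s / 2 * norm (cube_log_kernel s a x)"
    by (rule mult_left_mono) simp
  also have "\<dots> = real s * norm (cube_log_kernel s a x) / 2"
    by simp
  also have "\<dots> \<le> real s * norm (cube_log_kernel s a x) / norm (1 - z * complex_of_real ?P)"
    using denom_pos denom_le by (intro divide_left_mono) auto
  also have "\<dots> = norm (indicator (unit_cube s) x *\<^sub>R lerch_integrand s z a x)"
    by (simp add: lerch_integrand_eq_log_kernel norm_divide norm_mult)
  finally show ?thesis .
qed

lemma cube_nn_integral_norm_lerch_integrand_lower_bound:
  assumes s: "s \<ge> 1" and z: "norm z \<le> 1" and t: "0 < t" "Re a \<le> t"
  shows "ennreal (1 / (2 * t ^ s))
         \<le> (\<integral>\<^sup>+x. ennreal (norm (indicator (unit_cube s) x *\<^sub>R lerch_integrand s z a x)) \<partial>cube_measure s)"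
proof -
  let ?G = "\<lambda>x. indicator (unit_cube s) x *\<^sub>R lerch_integrand s z a x"
  let ?f = "\<lambda>x. indicator (unit_cube s) x * (cube_prod s x powr (t - 1) / - ln (cube_prod s x))"
  have "ennreal (1 / (2 * t ^ s)) = ennreal (real s / 2) * ennreal (1 / (real s * t ^ s))"
    using s t by (simp add: ennreal_mult'[symmetric] field_simps)
  also have "\<dots> = ennreal (real s / 2) * (\<integral>\<^sup>+x. ennreal (?f x) \<partial>cube_measure s)"
    by (simp only: cube_nn_integral_log_kernel[OF t(1) s])
  also have "\<dots> = (\<integral>\<^sup>+x. ennreal (real s / 2) * ennreal (?f x) \<partial>cube_measure s)"
    by (rule nn_integral_cmult[symmetric]) measurable
  also have "\<dots> \<le> (\<integral>\<^sup>+x. ennreal (norm (?G x)) \<partial>cube_measure s)"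
  proof (rule nn_integral_mono_AE)
    show "AE x in cube_measure s. ennreal (real s / 2) * ennreal (?f x) \<le> ennreal (norm (?G x))"
      using AE_cube_prod_bounds[of s]
    proof eventually_elim
      case (elim x)
      show ?case
      proof (cases "x \<in> unit_cube s")
        case True
        with elim have "real s / 2 * ?f x \<le> norm (?G x)"
          using norm_lerch_integrand_lower_bound[OF s z t(2)] by simp
        then have "ennreal (real s / 2 * ?f x) \<le> ennreal (norm (?G x))"
          by (rule ennreal_leI)
        moreover have "ennreal (real s / 2 * ?f x) = ennreal (real s / 2) * ennreal (?f x)"
          by (rule ennreal_mult') simp
        ultimately show ?thesis by (simp only:)
      qed simp
    qed
  qed
  finally show ?thesis .
qed

lemma Re_pos_if_integrable_lerch_integrand:
  assumes s: "s \<ge> 1" and z: "norm z \<le> 1"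
    and int: "set_integrable (cube_measure s) (unit_cube s) (lerch_integrand s z a)"
  shows "Re a > 0"
proof (rule ccontr)
  assume "\<not> Re a > 0"
  let ?Q = "\<integral>\<^sup>+x. ennreal (norm (indicator (unit_cube s) x *\<^sub>R lerch_integrand s z a x)) \<partial>cube_measure s"
  have "?Q < \<infinity>"
    using int unfolding set_integrable_def integrable_iff_bounded by (rule conjunct2)
  then obtain q where q: "?Q = ennreal q" "q \<ge> 0"
    by (cases ?Q) auto
  define t where "t = 1 / (2 * q + 2)"
  have t: "0 < t" "t \<le> 1" using q(2) by (auto simp: t_def field_simps)
  have "q + 1 = 1 / (2 * t)" using q(2) by (simp add: t_def)
  also have "\<dots> \<le> 1 / (2 * t ^ s)"
    using t s power_decreasing[of 1 s t] by (intro divide_left_mono mult_pos_pos) auto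
  also have "\<dots> \<le> q"
  proof -
    have "Re a \<le> t" using t \<open>\<not> Re a > 0\<close> by simp
    then have "ennreal (1 / (2 * t ^ s)) \<le> ennreal q"
      by (rule cube_nn_integral_norm_lerch_integrand_lower_bound[OF s z t(1), THEN order_trans])
         (rule eq_refl[OF q(1)])
    then show ?thesis using q(2) by (simp add: ennreal_le_iff)
  qed
  finally show False by simp
qed

lemma lerch_integrand_times_geometric:
  assumes x: "0 < cube_prod s x" "cube_prod s x < 1" and z: "norm z \<le> 1"
  shows "indicator (unit_cube s) x *\<^sub>R lerch_integrand s z a x * (1 - (z * complex_of_real (cube_prod s x)) ^ N)
         = (\<Sum>k<N. z ^ k * of_nat s * cube_log_kernel s (of_nat k + a) x)"
proof -
  let ?p = "complex_of_real (cube_prod s x)"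
  have "norm (z * ?p) < 1"
    using x by (intro norm_mult_of_real_less_one[OF z]) auto
  then have "z * ?p \<noteq> 1" by auto
  then have "indicator (unit_cube s) x *\<^sub>R lerch_integrand s z a x * (1 - (z * ?p) ^ N)
             = of_nat s * cube_log_kernel s a x * (\<Sum>k<N. (z * ?p) ^ k)"
    by (simp add: lerch_integrand_eq_log_kernel sum_gp_strict)
  also have "\<dots> = (\<Sum>k<N. z ^ k * of_nat s * (?p ^ k * cube_log_kernel s a x))"
    by (simp add: sum_distrib_left power_mult_distrib algebra_simps)
  finally show ?thesis
    using x by (simp add: cube_log_kernel_shift)
qed

lemma integral_lerch_integrand_times_geometric:
  assumes s: "s \<ge> 1" and z: "norm z \<le> 1" and a: "Re a > 0"
  shows "(\<integral>x. indicator (unit_cube s) x *\<^sub>R lerch_integrand s z a x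
                 * (1 - (z * complex_of_real (cube_prod s x)) ^ N) \<partial>cube_measure s)
         = (\<Sum>k<N. z ^ k / (of_nat k + a) ^ s)"
proof -
  have kernel: "Re (of_nat k + a) > 0" for k using a by simp
  have "AE x in cube_measure s. indicator (unit_cube s) x *\<^sub>R lerch_integrand s z a x
            * (1 - (z * complex_of_real (cube_prod s x)) ^ N)
          = (\<Sum>k<N. z ^ k * of_nat s * cube_log_kernel s (of_nat k + a) x)"
    using AE_cube_prod_bounds[of s]
  proof eventually_elim
    case (elim x)
    show ?case
    proof (cases "x \<in> unit_cube s")
      case True
      with elim show ?thesis by (intro lerch_integrand_times_geometric z) auto
    qed (simp add: cube_log_kernel_def)
  qed
  then have "(\<integral>x. indicator (unit_cube s) x *\<^sub>R lerch_integrand s z a x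
                 * (1 - (z * complex_of_real (cube_prod s x)) ^ N) \<partial>cube_measure s)
        = (\<integral>x. (\<Sum>k<N. z ^ k * of_nat s * cube_log_kernel s (of_nat k + a) x) \<partial>cube_measure s)"
    by (rule integral_cong_AE[rotated 2]) measurable
  also have "\<dots> = (\<Sum>k<N. z ^ k * of_nat s * integral\<^sup>L (cube_measure s) (cube_log_kernel s (of_nat k + a)))"
    using cube_integral_log_kernel(1)[OF kernel s] by (simp add: Bochner_Integration.integral_sum)
  also have "\<dots> = (\<Sum>k<N. z ^ k / (of_nat k + a) ^ s)"
    using s by (simp add: cube_integral_log_kernel(2)[OF kernel s])
  finally show ?thesis .
qed

lemma norm_lerch_integrand_times_geometric_le:
  assumes z: "norm z \<le> 1"
  shows "norm (indicator (unit_cube s) x *\<^sub>R lerch_integrand s z a x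
            * (1 - (z * complex_of_real (cube_prod s x)) ^ N))
         \<le> 2 * norm (indicator (unit_cube s) x *\<^sub>R lerch_integrand s z a x)"
proof (cases "x \<in> unit_cube s")
  case True
  then have "norm (z * complex_of_real (cube_prod s x)) \<le> 1"
    using z cube_prod_nonneg cube_prod_le_one by (simp add: norm_mult mult_le_one)
  then have "norm (z * complex_of_real (cube_prod s x)) ^ N \<le> 1"
    by (intro power_le_one) auto
  then have "norm (1 - (z * complex_of_real (cube_prod s x)) ^ N) \<le> 2"
    using norm_triangle_ineq4[of 1 "(z * complex_of_real (cube_prod s x)) ^ N"]
    by (simp add: norm_power)
  then have "norm (lerch_integrand s z a x) * norm (1 - (z * complex_of_real (cube_prod s x)) ^ N)
             \<le> norm (lerch_integrand s z a x) * 2"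
    by (rule mult_left_mono) simp
  then show ?thesis
    using True by (simp add: norm_mult mult.commute)
qed simp

lemma tendsto_integral_lerch_integrand_times_geometric:
  assumes z: "norm z \<le> 1"
    and int: "set_integrable (cube_measure s) (unit_cube s) (lerch_integrand s z a)"
  shows "(\<lambda>N. \<integral>x. indicator (unit_cube s) x *\<^sub>R lerch_integrand s z a x
                 * (1 - (z * complex_of_real (cube_prod s x)) ^ N) \<partial>cube_measure s)
         \<longlonglongrightarrow> (LINT x:unit_cube s|cube_measure s. lerch_integrand s z a x)"
  unfolding set_lebesgue_integral_def
proof (rule integral_dominated_convergence[where w="\<lambda>x. 2 * norm (indicator (unit_cube s) x *\<^sub>R lerch_integrand s z a x)"])
  show "integrable (cube_measure s) (\<lambda>x. 2 * norm (indicator (unit_cube s) x *\<^sub>R lerch_integrand s z a x))"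
    using int unfolding set_integrable_def by (intro integrable_mult_right integrable_norm)
  show "AE x in cube_measure s. (\<lambda>N. indicator (unit_cube s) x *\<^sub>R lerch_integrand s z a x
            * (1 - (z * complex_of_real (cube_prod s x)) ^ N))
          \<longlonglongrightarrow> indicator (unit_cube s) x *\<^sub>R lerch_integrand s z a x"
    using AE_cube_prod_bounds[of s]
  proof eventually_elim
    case (elim x)
    show ?case
    proof (cases "x \<in> unit_cube s")
      case True
      with elim have "norm (z * complex_of_real (cube_prod s x)) < 1"
        by (intro norm_mult_of_real_less_one z) auto
      then have "(\<lambda>N. (z * complex_of_real (cube_prod s x)) ^ N) \<longlonglongrightarrow> 0"
        by (rule LIMSEQ_power_zero)
      then have "(\<lambda>N. indicator (unit_cube s) x *\<^sub>R lerch_integrand s z a x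
                   * (1 - (z * complex_of_real (cube_prod s x)) ^ N))
                 \<longlonglongrightarrow> indicator (unit_cube s) x *\<^sub>R lerch_integrand s z a x * (1 - 0)"
        by (rule tendsto_mult[OF tendsto_const tendsto_diff[OF tendsto_const]])
      then show ?thesis by simp
    qed simp
  qed
  show "AE x in cube_measure s. norm (indicator (unit_cube s) x *\<^sub>R lerch_integrand s z a x
            * (1 - (z * complex_of_real (cube_prod s x)) ^ N))
          \<le> 2 * norm (indicator (unit_cube s) x *\<^sub>R lerch_integrand s z a x)" for N
    by (rule AE_I2) (rule norm_lerch_integrand_times_geometric_le[OF z])
qed measurable

lemma lerch_phi_eq_cube_integral:
  assumes s: "s \<ge> 1"
    and sum: "summable (\<lambda>k. z ^ k / (of_nat k + a) ^ s)"
    and int: "set_integrable (cube_measure s) (unit_cube s) (lerch_integrand s z a)"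
  shows "lerch_phi z s a = (LINT x:unit_cube s|cube_measure s. lerch_integrand s z a x)"
proof -
  have z: "norm z \<le> 1" by (rule norm_le_one_if_summable_lerch_series[OF sum])
  have a: "Re a > 0" by (rule Re_pos_if_integrable_lerch_integrand[OF s z int])
  have "(\<lambda>N. \<Sum>k<N. z ^ k / (of_nat k + a) ^ s) \<longlonglongrightarrow> (LINT x:unit_cube s|cube_measure s. lerch_integrand s z a x)"
    using tendsto_integral_lerch_integrand_times_geometric[OF z int]
    unfolding integral_lerch_integrand_times_geometric[OF s z a] .
  moreover have "(\<lambda>N. \<Sum>k<N. z ^ k / (of_nat k + a) ^ s) \<longlonglongrightarrow> lerch_phi z s a"
    unfolding lerch_phi_def by (rule summable_LIMSEQ[OF sum])
  ultimately show ?thesis by (rule LIMSEQ_unique[rotated])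
qed

lemma zeta_int_eq_cube_integral:
  assumes s: "s > 1"
    and int: "set_integrable (cube_measure s) (unit_cube s)
                (\<lambda>x. - of_nat s / ((1 - complex_of_real (cube_prod s x)) * complex_of_real (ln (cube_prod s x))))"
  shows "zeta_int s = (LINT x:unit_cube s|cube_measure s.
           - of_nat s / ((1 - complex_of_real (cube_prod s x)) * complex_of_real (ln (cube_prod s x))))"
proof -
  \<comment> \<open>only almost everywhere, since \<open>0 powr 0 = 0\<close> for complex powers\<close>
  have ae: "AE x \<in> unit_cube s in cube_measure s.
      - of_nat s / ((1 - complex_of_real (cube_prod s x)) * complex_of_real (ln (cube_prod s x)))
      = lerch_integrand s 1 1 x"
    using AE_cube_prod_bounds[of s] by eventually_elim (auto simp: lerch_integrand_def)
  have "summable (\<lambda>k. inverse (of_nat (Suc k) ^ s :: complex))"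
    using s inverse_power_summable[of s] by (subst summable_Suc_iff) simp
  then have sum: "summable (\<lambda>k. 1 ^ k / (of_nat k + 1) ^ s :: complex)"
    by (simp add: divide_inverse add.commute)
  have "set_integrable (cube_measure s) (unit_cube s) (lerch_integrand s 1 1)"
    using int by (subst set_integrable_cong_AE[OF _ _ ae, symmetric]) simp_all
  then have "lerch_phi 1 s 1 = (LINT x:unit_cube s|cube_measure s. lerch_integrand s 1 1 x)"
    using s by (intro lerch_phi_eq_cube_integral sum) simp_all
  also have "\<dots> = (LINT x:unit_cube s|cube_measure s.
           - of_nat s / ((1 - complex_of_real (cube_prod s x)) * complex_of_real (ln (cube_prod s x))))"
    by (rule set_lebesgue_integral_cong_AE[OF _ _ _ ae, symmetric]) simp_all
  finally show ?thesis
    unfolding zeta_int_def lerch_phi_def by (simp add: add.commute)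
qed

theorem theorem3p1:
  fixes s :: nat and z a :: complex
  assumes "s > 1"
    and "\<forall>k::nat. of_nat k + a \<noteq> 0"
    and "summable (\<lambda>k. z ^ k / (of_nat k + a) ^ s)"
    and "set_integrable (cube_measure s) (unit_cube s)
           (\<lambda>x. (- of_nat s * (complex_of_real (\<Prod>n\<in>{1..s+1}. x n)) powr (a - 1))
                / ((1 - z * complex_of_real (\<Prod>n\<in>{1..s+1}. x n))
                   * complex_of_real (ln (\<Prod>n\<in>{1..s+1}. x n))))"
  shows "lerch_phi z s a =
           (LINT x:unit_cube s|cube_measure s.
              (- of_nat s * (complex_of_real (\<Prod>n\<in>{1..s+1}. x n)) powr (a - 1))
                / ((1 - z * complex_of_real (\<Prod>n\<in>{1..s+1}. x n))
                   * complex_of_real (ln (\<Prod>n\<in>{1..s+1}. x n))))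
         \<and> (set_integrable (cube_measure s) (unit_cube s)
           (\<lambda>x. (- of_nat s)
                / ((1 - complex_of_real (\<Prod>k\<in>{1..s+1}. x k))
                   * complex_of_real (ln (\<Prod>k\<in>{1..s+1}. x k))))
         \<longrightarrow> zeta_int s =
           (LINT x:unit_cube s|cube_measure s.
              (- of_nat s)
                / ((1 - complex_of_real (\<Prod>k\<in>{1..s+1}. x k))
                   * complex_of_real (ln (\<Prod>k\<in>{1..s+1}. x k)))))"
  using lerch_phi_eq_cube_integral[of s z a] zeta_int_eq_cube_integral[of s] assms(1,3,4)
  unfolding lerch_integrand_def[abs_def] cube_prod_def by simp

end
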